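(* Let $R,V,q$ be as in the setting. Let $x,y\in V$ be $q$-minimal vectors with $y<x$ and $q(y)\cong_\nu q(x)$, and let $J=\operatorname{supp}(y)$. Then $q(y)\in\mathcal T$, $q(x)\in\mathcal G$, and one of the following holds: 1) $|\operatorname{supp}(y)|=|\operatorname{supp}(x)|=1$ and $x=ey$; 2) $|\operatorname{supp}(y)|=|\operatorname{supp}(x)|=2$ and $y<x<ey$; 3) $|\operatorname{supp}(y)|=1$, $|\operatorname{supp}(x)|\ge2$ and $y=x(J)$; 4) $|\operatorname{supp}(y)|=2$, $|\operatorname{supp}(x)|\ge3$ and $y=x(J)$.
   Context: All semirings are commutative with $1$. A semiring $R$ is supertropical if $e:=1+1$ satisfies $e+e=e$ and, for all $x,y\in R$: if $ex\neq ey$ then $x+y\in\{x,y\}$, and if $ex=ey$ then $x+y=ey$. Write $x\cong_\nu y$ for $ex=ey$. $\mathcal T=R\setminus eR$, $\mathcal G=eR\setminus\{0\}$. Setting: $R$ is supertropical with $e\mathcal T=\mathcal G$, $\mathcal T\cdot\mathcal T\subseteq\mathcal T$, $\mathcal G$ cancellative under multiplication; $V$ is a free $R$-module with base $(\varepsilon_i\mid i\in I)$; $q:V\to R$ is a quadratic form (i.e. $q(ax)=a^2q(x)$ and $q(x+y)=q(x)+q(y)+b(x,y)$ for some symmetric bilinear $b$). For $x=\sum_ix_i\varepsilon_i$ and $S\subseteq I$, $x(S)=\sum_{i\in S}x_i\varepsilon_i$, $\operatorname{supp}(x)=\{i:x_i\neq0\}$. Minimal ordering: $x\le y\iff\exists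 z:\ x+z=y$; $x<y$ means $x\le y$, $x\ne y$. $x$ is $q$-minimal if no $x'<x$ has $q(x')=q(x)$. *)

theory Defs
  imports Main
begin

definition st_e :: "'a::comm_semiring_1" where
  "st_e = 1 + 1"

definition supertropical :: "'a::comm_semiring_1 itself \<Rightarrow> bool" where
  "supertropical (TYPE('a)) \<longleftrightarrow>
     (st_e::'a) + st_e = st_e \<and>
     (\<forall>x y :: 'a. (st_e * x \<noteq> st_e * y \<longrightarrow> x + y \<in> {x, y}) \<and>
                  (st_e * x = st_e * y \<longrightarrow> x + y = st_e * y))"

definition nu_equiv :: "'a::comm_semiring_1 \<Rightarrow> 'a \<Rightarrow> bool" (infix "\<cong>\<^sub>\<nu>" 50) where
  "x \<cong>\<^sub>\<nu> y \<longleftrightarrow> st_e * x = st_e * y"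

definition ghostR :: "'a::comm_semiring_1 set" where
  "ghostR = {z. \<exists>y. z = st_e * y}"

definition tangT :: "'a::comm_semiring_1 set" where
  "tangT = UNIV - ghostR"

definition ghostG :: "'a::comm_semiring_1 set" where
  "ghostG = ghostR - {0}"

definition setting_R :: "'a::comm_semiring_1 itself \<Rightarrow> bool" where
  "setting_R (TYPE('a)) \<longleftrightarrow>
     supertropical TYPE('a) \<and>
     (\<lambda>x. st_e * x) ` (tangT::'a set) = ghostG \<and>
     (\<forall>x\<in>(tangT::'a set). \<forall>y\<in>tangT. x * y \<in> tangT) \<and>
     (\<forall>a\<in>(ghostG::'a set). \<forall>b\<in>ghostG. \<forall>c\<in>ghostG. a * c = b * c \<longrightarrow> a = b)"

(* The free module V with base indexed by 'i: finitely supported functions 'i \<Rightarrow> R,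
   with pointwise addition and scalar multiplication; \<epsilon>_i is the indicator of i. *)
definition supp :: "('i \<Rightarrow> 'a::zero) \<Rightarrow> 'i set" where
  "supp x = {i. x i \<noteq> 0}"

definition freeV :: "('i \<Rightarrow> 'a::zero) set" where
  "freeV = {x. finite (supp x)}"

definition vadd :: "('i \<Rightarrow> 'a::plus) \<Rightarrow> ('i \<Rightarrow> 'a) \<Rightarrow> 'i \<Rightarrow> 'a" where
  "vadd x y = (\<lambda>i. x i + y i)"

definition smult :: "'a::times \<Rightarrow> ('i \<Rightarrow> 'a) \<Rightarrow> 'i \<Rightarrow> 'a" where
  "smult a x = (\<lambda>i. a * x i)"

definition restr :: "('i \<Rightarrow> 'a::zero) \<Rightarrow> 'i set \<Rightarrow> 'i \<Rightarrow> 'a" where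
  "restr x S = (\<lambda>i. if i \<in> S then x i else 0)"

definition symm_bilinear :: "(('i \<Rightarrow> 'a::comm_semiring_1) \<Rightarrow> ('i \<Rightarrow> 'a) \<Rightarrow> 'a) \<Rightarrow> bool" where
  "symm_bilinear b \<longleftrightarrow>
     (\<forall>x\<in>freeV. \<forall>y\<in>freeV. b x y = b y x) \<and>
     (\<forall>x\<in>freeV. \<forall>y\<in>freeV. \<forall>z\<in>freeV. b (vadd x y) z = b x z + b y z) \<and>
     (\<forall>a. \<forall>x\<in>freeV. \<forall>y\<in>freeV. b (smult a x) y = a * b x y)"

definition quadratic_form :: "(('i \<Rightarrow> 'a::comm_semiring_1) \<Rightarrow> 'a) \<Rightarrow> bool" where
  "quadratic_form q \<longleftrightarrow>
     (\<forall>a. \<forall>x\<in>freeV. q (smult a x) = a^2 * q x) \<and>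
     (\<exists>b. symm_bilinear b \<and> (\<forall>x\<in>freeV. \<forall>y\<in>freeV. q (vadd x y) = q x + q y + b x y))"

definition mle :: "('i \<Rightarrow> 'a::comm_semiring_1) \<Rightarrow> ('i \<Rightarrow> 'a) \<Rightarrow> bool" where
  "mle x y \<longleftrightarrow> (\<exists>z\<in>freeV. vadd x z = y)"

definition mless :: "('i \<Rightarrow> 'a::comm_semiring_1) \<Rightarrow> ('i \<Rightarrow> 'a) \<Rightarrow> bool" where
  "mless x y \<longleftrightarrow> mle x y \<and> x \<noteq> y"

definition q_minimal :: "(('i \<Rightarrow> 'a::comm_semiring_1) \<Rightarrow> 'a) \<Rightarrow> ('i \<Rightarrow> 'a) \<Rightarrow> bool" where
  "q_minimal q x \<longleftrightarrow> x \<in> freeV \<and> \<not> (\<exists>x'\<in>freeV. mless x' x \<and> q x' = q x)"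

end

(*
  Write x = y + z. Minimality of x gives q(x) \<noteq> q(y), while q(x) = q(y) + (q(z) + b(y, z)) is
  \<nu>-equivalent to q(y); supertropical addition then forces q(x) = e q(y) with q(y) tangible.
  A tangible value of q is one single monomial of the expansion
  q(y) = \<Sum> y_i\<^sup>2 q(\<epsilon>_i) + \<Sum> y_i y_j b(\<epsilon>_i, \<epsilon>_j), so q-minimality of y leaves
  |supp y| \<in> {1, 2}, the cross term being the dominant one when |supp y| = 2. Comparing this
  monomial with the corresponding one of q(x(J)) \<le>\<^sub>\<nu> q(x) \<cong>\<^sub>\<nu> q(y) gives x_k \<in> {y_k, e y_k} on J.
  If x agrees with y on J then y = x(J). Otherwise q(x(J)) = e q(y) = q(x), so x = x(J) by
  minimality; for |J| = 1 this is x = e y, and for |J| = 2 the inequality x < e y is strict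
  because e y is not q-minimal: doubling one coordinate of y already gives the value e q(y).
*)

theory Submission
  imports Defs
begin

definition nu_le :: "'a::comm_semiring_1 \<Rightarrow> 'a \<Rightarrow> bool" (infix "\<le>\<^sub>\<nu>" 50) where
  "a \<le>\<^sub>\<nu> b \<longleftrightarrow> st_e * a + st_e * b = st_e * b"

definition nu_less :: "'a::comm_semiring_1 \<Rightarrow> 'a \<Rightarrow> bool" (infix "<\<^sub>\<nu>" 50) where
  "a <\<^sub>\<nu> b \<longleftrightarrow> a \<le>\<^sub>\<nu> b \<and> \<not> a \<cong>\<^sub>\<nu> b"

lemma st_e_mult_in_ghostR: "st_e * a \<in> ghostR"
  unfolding ghostR_def by blast

lemma nu_le_trans: "a \<le>\<^sub>\<nu> b \<Longrightarrow> b \<le>\<^sub>\<nu> c \<Longrightarrow> a \<le>\<^sub>\<nu> c"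
  unfolding nu_le_def by (metis add.assoc)

lemma nu_le_antisym: "a \<le>\<^sub>\<nu> b \<Longrightarrow> b \<le>\<^sub>\<nu> a \<Longrightarrow> a \<cong>\<^sub>\<nu> b"
  unfolding nu_le_def nu_equiv_def by (metis add.commute)

lemma nu_le_mult_right: "a \<le>\<^sub>\<nu> b \<Longrightarrow> a * c \<le>\<^sub>\<nu> b * c"
  unfolding nu_le_def by (metis distrib_right mult.assoc)

lemma nu_less_cong: "a \<cong>\<^sub>\<nu> a' \<Longrightarrow> b \<cong>\<^sub>\<nu> b' \<Longrightarrow> a <\<^sub>\<nu> b \<longleftrightarrow> a' <\<^sub>\<nu> b'"
  unfolding nu_less_def nu_le_def nu_equiv_def by simp

lemma nu_equiv_mult_right: "a \<cong>\<^sub>\<nu> a' \<Longrightarrow> a * c \<cong>\<^sub>\<nu> a' * c"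
  unfolding nu_equiv_def by (simp only: mult.assoc[symmetric])

definition basis_vec :: "'i \<Rightarrow> 'i \<Rightarrow> 'a::comm_semiring_1" where
  "basis_vec i = (\<lambda>k. if k = i then 1 else 0)"

lemma supp_restr: "supp (restr v S) = S \<inter> supp v"
  unfolding supp_def restr_def by auto

lemma restr_in_freeV_finite: "finite S \<Longrightarrow> restr v S \<in> freeV"
  unfolding freeV_def by (simp add: supp_restr)

lemma restr_in_freeV: "v \<in> freeV \<Longrightarrow> restr v S \<in> freeV"
  unfolding freeV_def by (simp add: supp_restr)

lemma smult_in_freeV: "v \<in> freeV \<Longrightarrow> smult (a::'a::mult_zero) v \<in> freeV"
  unfolding freeV_def mem_Collect_eq by (erule finite_subset[rotated]) (auto simp: supp_def smult_def)

lemma zero_in_freeV: "(\<lambda>_. 0) \<in> freeV"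
  unfolding freeV_def supp_def by simp

lemma basis_vec_in_freeV: "basis_vec i \<in> freeV"
  unfolding freeV_def mem_Collect_eq
  by (rule finite_subset[of _ "{i}"]) (auto simp: supp_def basis_vec_def)

lemma restr_eq_self: "supp v \<subseteq> S \<Longrightarrow> restr v S = v"
  unfolding restr_def supp_def by (rule ext) auto

lemma restr_empty: "restr v {} = (\<lambda>_. 0)"
  unfolding restr_def by simp

lemma restr_singleton: "restr v {i} = smult (v i) (basis_vec i)"
  unfolding restr_def smult_def basis_vec_def by auto

lemma restr_insert:
  "k \<notin> S \<Longrightarrow> restr v (insert k S) = vadd (restr v S) (restr (v::'i \<Rightarrow> 'a::monoid_add) {k})"
  unfolding restr_def vadd_def by (rule ext) auto

lemma restr_restr: "restr (restr v S) T = restr v (S \<inter> T)"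
  unfolding restr_def by auto

lemma mle_restr: "v \<in> freeV \<Longrightarrow> mle (restr v S) v"
  unfolding mle_def
proof
  show "vadd (restr v S) (restr v (- S)) = v" unfolding vadd_def restr_def by auto
qed (rule restr_in_freeV)

lemma restr_supp_eq_card_less:
  assumes "x \<in> freeV" and "y \<noteq> x" and agree: "\<forall>k\<in>supp y. x k = y k"
  shows "y = restr x (supp y) \<and> card (supp y) < card (supp x)"
proof
  show y: "y = restr x (supp y)" using agree unfolding restr_def supp_def by auto
  show "card (supp y) < card (supp x)"
  proof (rule psubset_card_mono)
    show "finite (supp x)" using assms(1) unfolding freeV_def by simp
    have "supp y \<subseteq> supp x" using supp_restr[of x "supp y"] y by auto
    moreover have "supp y \<noteq> supp x" using restr_eq_self[of x] y assms(2) by force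
    ultimately show "supp y \<subset> supp x" by blast
  qed
qed

definition quadratic_form_with_companion ::
    "(('i \<Rightarrow> 'a::comm_semiring_1) \<Rightarrow> 'a) \<Rightarrow> (('i \<Rightarrow> 'a) \<Rightarrow> ('i \<Rightarrow> 'a) \<Rightarrow> 'a) \<Rightarrow> bool" where
  "quadratic_form_with_companion q b \<longleftrightarrow>
     (\<forall>a. \<forall>x\<in>freeV. q (smult a x) = a^2 * q x) \<and> symm_bilinear b \<and>
     (\<forall>x\<in>freeV. \<forall>y\<in>freeV. q (vadd x y) = q x + q y + b x y)"

lemma quadratic_form_obtain_companion:
  assumes "quadratic_form q"
  obtains b where "quadratic_form_with_companion q b"
  using assms unfolding quadratic_form_def quadratic_form_with_companion_def by blast

context
  assumes supertropical: "supertropical TYPE('a::comm_semiring_1)"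
begin

lemma supertropical_add_cases: "\<not> a \<cong>\<^sub>\<nu> b \<Longrightarrow> a + b = a \<or> a + b = (b::'a)"
  using supertropical unfolding supertropical_def nu_equiv_def by blast

lemma supertropical_add_nu_equiv: "a \<cong>\<^sub>\<nu> b \<Longrightarrow> a + b = st_e * (b::'a)"
  using supertropical unfolding supertropical_def nu_equiv_def by blast

lemma st_e_mult_idem: "st_e * st_e = (st_e::'a)"
proof -
  have "st_e * st_e = st_e * (1 + 1::'a)" by (simp only: st_e_def)
  also have "\<dots> = st_e + st_e" by (simp only: distrib_left mult_1_right)
  also have "\<dots> = st_e" using supertropical by (simp add: supertropical_def)
  finally show ?thesis .
qed

lemma st_e_mult_absorb: "st_e * (st_e * a) = st_e * (a::'a)"
  by (simp add: mult.assoc[symmetric] st_e_mult_idem)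

lemma st_e_mult_eq_0D: "st_e * a = 0 \<Longrightarrow> a = (0::'a)"
  using supertropical_add_nu_equiv[of a 0] by (simp add: nu_equiv_def)

lemma ghostR_iff: "a \<in> ghostR \<longleftrightarrow> st_e * a = (a::'a)"
proof
  show "a \<in> ghostR \<Longrightarrow> st_e * a = a" unfolding ghostR_def by (auto simp: st_e_mult_absorb)
  show "st_e * a = a \<Longrightarrow> a \<in> ghostR" using st_e_mult_in_ghostR[of a] by simp
qed

lemma ghost_add_idem: "st_e * a + st_e * a = st_e * (a::'a)"
  using supertropical_add_nu_equiv[of "st_e * a" "st_e * a"] by (simp add: nu_equiv_def st_e_mult_absorb)

lemma tangT_ghostG: "a \<notin> ghostR \<Longrightarrow> a \<in> tangT \<and> st_e * a \<in> (ghostG::'a set)"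
  unfolding tangT_def ghostG_def using st_e_mult_in_ghostR st_e_mult_eq_0D[of a] ghostR_iff[of 0]
  by auto

lemma nu_equiv_imp_nu_le: "a \<cong>\<^sub>\<nu> b \<Longrightarrow> a \<le>\<^sub>\<nu> (b::'a)"
  unfolding nu_le_def nu_equiv_def by (simp add: ghost_add_idem)

lemma nu_le_add_left: "a \<le>\<^sub>\<nu> a + (b::'a)"
  unfolding nu_le_def by (simp add: distrib_left add.assoc[symmetric] ghost_add_idem)

lemma nu_le_add_right: "b \<le>\<^sub>\<nu> a + (b::'a)"
  using nu_le_add_left[of b a] by (simp add: add.commute)

lemma nu_le_zeroD: "a \<le>\<^sub>\<nu> 0 \<Longrightarrow> a = (0::'a)"
  unfolding nu_le_def by (simp add: st_e_mult_eq_0D)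

lemma nu_le_less_trans: "a \<le>\<^sub>\<nu> b \<Longrightarrow> b <\<^sub>\<nu> c \<Longrightarrow> a <\<^sub>\<nu> (c::'a)"
proof -
  assume ab: "a \<le>\<^sub>\<nu> b" and bc: "b <\<^sub>\<nu> c"
  then have "a \<le>\<^sub>\<nu> c" unfolding nu_less_def using nu_le_trans by blast
  moreover have "\<not> a \<cong>\<^sub>\<nu> c"
  proof
    assume "a \<cong>\<^sub>\<nu> c"
    then have "c \<le>\<^sub>\<nu> b" using ab nu_equiv_imp_nu_le nu_le_trans unfolding nu_equiv_def by metis
    with bc show False unfolding nu_less_def using nu_le_antisym by blast
  qed
  ultimately show ?thesis unfolding nu_less_def ..
qed

lemma nu_less_absorb: "a <\<^sub>\<nu> u \<Longrightarrow> u + a = (u::'a)"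
proof -
  assume au: "a <\<^sub>\<nu> u"
  then have "\<not> u \<cong>\<^sub>\<nu> a" unfolding nu_less_def nu_equiv_def by auto
  then have "u + a = u \<or> u + a = a" by (rule supertropical_add_cases)
  moreover have "u + a \<noteq> a"
  proof
    assume "u + a = a"
    then have "u \<le>\<^sub>\<nu> a" using nu_le_add_left[of u a] by simp
    with au show False unfolding nu_less_def using nu_le_antisym by blast
  qed
  ultimately show ?thesis by blast
qed

lemma add_nonghost_cases:
  assumes "a + b \<notin> (ghostR::'a set)"
  shows "(a + b = a \<and> b <\<^sub>\<nu> a) \<or> (a + b = b \<and> a <\<^sub>\<nu> b)"
proof -
  have ne: "\<not> a \<cong>\<^sub>\<nu> b"
    using assms supertropical_add_nu_equiv st_e_mult_in_ghostR by metis
  then have "\<not> b \<cong>\<^sub>\<nu> a" by (simp add: nu_equiv_def)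
  from supertropical_add_cases[OF ne] show ?thesis
  proof
    assume "a + b = a"
    moreover have "b \<le>\<^sub>\<nu> a + b" by (rule nu_le_add_right)
    ultimately show ?thesis using \<open>\<not> b \<cong>\<^sub>\<nu> a\<close> unfolding nu_less_def by simp
  next
    assume "a + b = b"
    moreover have "a \<le>\<^sub>\<nu> a + b" by (rule nu_le_add_left)
    ultimately show ?thesis using ne unfolding nu_less_def by simp
  qed
qed

lemma add_nonghost_cases3:
  assumes "a + b + c \<notin> (ghostR::'a set)"
  shows "a + b + c = a \<or> a + b + c = b \<or> (a + b + c = c \<and> a + b <\<^sub>\<nu> c)"
proof -
  from add_nonghost_cases[OF assms]
  consider "a + b + c = a + b" | "a + b + c = c \<and> a + b <\<^sub>\<nu> c" by blast
  then show ?thesis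
  proof cases
    case 1
    then have "a + b \<notin> ghostR" using assms by simp
    with 1 show ?thesis using add_nonghost_cases[of a b] by auto
  qed simp
qed

lemma sum_nonghost_eq_summand:
  "finite A \<Longrightarrow> sum f A \<notin> (ghostR::'a set) \<Longrightarrow> \<exists>i\<in>A. f i = sum f A"
proof (induction A rule: finite_induct)
  case empty
  then show ?case using st_e_mult_in_ghostR[of "0::'a"] by simp
next
  case (insert k A)
  then show ?case using add_nonghost_cases[of "f k" "sum f A"] by auto
qed

lemma nu_equiv_add_ghost: "a \<cong>\<^sub>\<nu> b \<Longrightarrow> a + st_e * b = st_e * (b::'a)"
  using supertropical_add_nu_equiv[of a "st_e * b"] by (simp add: nu_equiv_def st_e_mult_absorb)

lemma nu_equiv_add_cases: "a + z \<cong>\<^sub>\<nu> a \<Longrightarrow> a + z = a \<or> a + z = st_e * (a::'a)"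
proof (cases "a \<cong>\<^sub>\<nu> z")
  case True
  then show ?thesis using supertropical_add_nu_equiv[OF True] unfolding nu_equiv_def by simp
next
  case False
  assume "a + z \<cong>\<^sub>\<nu> a"
  with supertropical_add_cases[OF False] False show ?thesis unfolding nu_equiv_def by auto
qed

lemma nu_equiv_cancel:
  assumes R: "setting_R TYPE('a::comm_semiring_1)"
    and "a * w \<cong>\<^sub>\<nu> b * w" and "a \<noteq> 0" "b \<noteq> 0" "w \<noteq> (0::'a)"
  shows "a \<cong>\<^sub>\<nu> b"
proof -
  have ghostG: "st_e * u \<in> (ghostG::'a set)" if "u \<noteq> 0" for u :: 'a
    using that st_e_mult_eq_0D st_e_mult_in_ghostR unfolding ghostG_def by blast
  have "(st_e * a) * (st_e * w) = (st_e * b) * (st_e * w)"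
    using assms(2) st_e_mult_absorb unfolding nu_equiv_def by (metis mult.assoc mult.left_commute)
  then show ?thesis
    using R ghostG assms(3-5) unfolding setting_R_def nu_equiv_def by blast
qed

text \<open>From \<open>a b c \<le>\<^sub>\<nu> a' b c \<le>\<^sub>\<nu> a' b' c \<le>\<^sub>\<nu> a b c\<close> all three are \<open>\<nu>\<close>-equivalent;
  then cancel the nonzero ghosts \<open>e b c\<close> and \<open>e a' c\<close>.\<close>

lemma nu_equiv_factors:
  assumes R: "setting_R TYPE('a::comm_semiring_1)"
    and aa': "a \<le>\<^sub>\<nu> a'" and bb': "b \<le>\<^sub>\<nu> b'"
    and le: "a' * b' * c \<le>\<^sub>\<nu> a * b * c" and nz: "a * b * c \<noteq> (0::'a)"
  shows "a \<cong>\<^sub>\<nu> a' \<and> b \<cong>\<^sub>\<nu> b'"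
proof -
  have le1: "a * b * c \<le>\<^sub>\<nu> a' * b * c" by (intro nu_le_mult_right aa')
  have le2: "a' * b * c \<le>\<^sub>\<nu> a' * b' * c"
    using nu_le_mult_right[OF bb', of "a' * c"] by (simp add: ac_simps)
  have e1: "a * (b * c) \<cong>\<^sub>\<nu> a' * (b * c)"
    using nu_le_antisym[OF le1 nu_le_trans[OF le2 le]] by (simp add: mult.assoc)
  have e2: "b * (a' * c) \<cong>\<^sub>\<nu> b' * (a' * c)"
    using nu_le_antisym[OF le2 nu_le_trans[OF le le1]] by (simp add: ac_simps)
  have "a' * b * c \<noteq> 0"
    using e1 nz st_e_mult_eq_0D unfolding nu_equiv_def by (metis mult.assoc mult_zero_right)
  moreover have "a' * b * c = b * (a' * c)" by (simp add: ac_simps)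
  ultimately have nz': "a' \<noteq> 0" "b * c \<noteq> 0" "a' * c \<noteq> 0" by (auto simp: mult.assoc)
  have "a \<noteq> 0" "b \<noteq> 0" using nz by auto
  moreover have "b' \<noteq> 0" using nz'(2) nu_le_zeroD[of b] bb' by force
  ultimately show ?thesis
    using nu_equiv_cancel[OF R e1] nu_equiv_cancel[OF R e2] nz' by blast
qed

lemma mle_coord_nu_le: "mle u v \<Longrightarrow> u k \<le>\<^sub>\<nu> (v k::'a)"
  unfolding mle_def vadd_def using nu_le_add_left by blast

lemma mle_supp_subset: "mle u (v::'i \<Rightarrow> 'a) \<Longrightarrow> supp u \<subseteq> supp v"
proof
  fix k assume "mle u v" and "k \<in> supp u"
  then show "k \<in> supp v" unfolding supp_def using mle_coord_nu_le[of u v k] nu_le_zeroD[of "u k"] by force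
qed

lemma mle_coord_cases: "mle u v \<Longrightarrow> u k \<cong>\<^sub>\<nu> v k \<Longrightarrow> v k = u k \<or> v k = st_e * (u k::'a)"
  unfolding mle_def vadd_def using nu_equiv_add_cases
  by (metis nu_equiv_def)

lemma mle_smult_st_e:
  assumes "v \<in> freeV" and "\<And>k. u k \<cong>\<^sub>\<nu> (v k::'a)"
  shows "mle u (smult st_e v)"
  unfolding mle_def
proof
  show "vadd u (smult st_e v) = smult st_e v"
    unfolding vadd_def smult_def using nu_equiv_add_ghost assms(2) by simp
  show "smult st_e v \<in> freeV" using assms(1) by (rule smult_in_freeV)
qed

context
  fixes q :: "('i \<Rightarrow> 'a) \<Rightarrow> 'a" and b :: "('i \<Rightarrow> 'a) \<Rightarrow> ('i \<Rightarrow> 'a) \<Rightarrow> 'a"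
  assumes companion: "quadratic_form_with_companion q b"
begin

lemma q_smult: "x \<in> freeV \<Longrightarrow> q (smult a x) = a^2 * q x"
  using companion unfolding quadratic_form_with_companion_def by blast

lemma q_vadd: "x \<in> freeV \<Longrightarrow> y \<in> freeV \<Longrightarrow> q (vadd x y) = q x + q y + b x y"
  using companion unfolding quadratic_form_with_companion_def by blast

lemma b_commute: "x \<in> freeV \<Longrightarrow> y \<in> freeV \<Longrightarrow> b x y = b y x"
  using companion unfolding quadratic_form_with_companion_def symm_bilinear_def by blast

lemma b_vadd_left: "x \<in> freeV \<Longrightarrow> y \<in> freeV \<Longrightarrow> z \<in> freeV \<Longrightarrow> b (vadd x y) z = b x z + b y z"
  using companion unfolding quadratic_form_with_companion_def symm_bilinear_def by blast

lemma b_smult_left: "x \<in> freeV \<Longrightarrow> y \<in> freeV \<Longrightarrow> b (smult a x) y = a * b x y"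
  using companion unfolding quadratic_form_with_companion_def symm_bilinear_def by blast

lemma b_smult_smult:
  assumes "x \<in> freeV" "y \<in> freeV"
  shows "b (smult a x) (smult c y) = a * c * b x y"
proof -
  have "b (smult a x) (smult c y) = a * b (smult c y) x"
    using assms by (simp add: b_smult_left b_commute smult_in_freeV)
  also have "\<dots> = a * c * b x y"
    using assms by (simp add: b_smult_left b_commute mult.assoc)
  finally show ?thesis .
qed

lemma q_zero: "q (\<lambda>_. 0) = 0"
  using q_smult[OF zero_in_freeV, of 0] by (simp add: smult_def)

lemma b_zero_left: "w \<in> freeV \<Longrightarrow> b (\<lambda>_. 0) w = 0"
  using b_smult_left[OF zero_in_freeV, of w 0] by (simp add: smult_def)

lemma b_restr_sum:
  "finite S \<Longrightarrow> w \<in> freeV \<Longrightarrow> b (restr v S) w = (\<Sum>i\<in>S. b (restr v {i}) w)"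
proof (induction S rule: finite_induct)
  case empty
  then show ?case by (simp add: restr_empty b_zero_left)
next
  case (insert k S)
  then show ?case
    unfolding restr_insert[OF insert.hyps(2)]
    by (simp add: b_vadd_left restr_in_freeV_finite add.commute)
qed

lemma q_restr_singleton: "q (restr v {i}) = (v i)^2 * q (basis_vec i)"
  by (simp add: restr_singleton q_smult basis_vec_in_freeV)

lemma q_restr_pair:
  assumes "i \<noteq> j"
  shows "q (restr v {i, j}) = (v i)^2 * q (basis_vec i) + (v j)^2 * q (basis_vec j)
    + v i * v j * b (basis_vec i) (basis_vec j)"
proof -
  have "restr v {i, j} = vadd (restr v {i}) (restr v {j})"
    using restr_insert[of j "{i}" v] assms by (simp add: insert_commute)
  then have "q (restr v {i, j}) = q (restr v {i}) + q (restr v {j}) + b (restr v {i}) (restr v {j})"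
    by (simp add: q_vadd restr_in_freeV_finite)
  also have "b (restr v {i}) (restr v {j}) = v i * v j * b (basis_vec i) (basis_vec j)"
    by (simp add: restr_singleton b_smult_smult basis_vec_in_freeV)
  finally show ?thesis by (simp add: q_restr_singleton)
qed

lemma q_mono: "u \<in> freeV \<Longrightarrow> mle u v \<Longrightarrow> q u \<le>\<^sub>\<nu> q v"
  unfolding mle_def using q_vadd nu_le_add_left by (metis add.assoc)

text \<open>A tangible sum equals one of its summands, so a dominating cross term \<open>b(v(S), v(k))\<close> is
  already some \<open>b(v(i), v(k))\<close>.\<close>

lemma q_restr_cross_dominant:
  assumes "finite S" "k \<notin> S"
    and nonghost: "b (restr v S) (restr v {k}) \<notin> ghostR"
    and dominant: "q (restr v S) + q (restr v {k}) <\<^sub>\<nu> b (restr v S) (restr v {k})"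
  shows "\<exists>i\<in>S. q (restr v {i, k}) = b (restr v S) (restr v {k})"
proof -
  let ?C = "b (restr v S) (restr v {k})"
  have fk: "restr v {k} \<in> freeV" by (simp add: restr_in_freeV_finite)
  obtain i where i: "i \<in> S" "b (restr v {i}) (restr v {k}) = ?C"
    using sum_nonghost_eq_summand[OF assms(1), of "\<lambda>i. b (restr v {i}) (restr v {k})"]
      b_restr_sum[OF assms(1) fk, of v] nonghost by auto
  have fi: "restr v {i} \<in> freeV" by (simp add: restr_in_freeV_finite)
  have "q (restr v {i}) \<le>\<^sub>\<nu> q (restr v S)"
    using q_mono[OF fi] mle_restr[OF restr_in_freeV_finite[OF assms(1)], of v "{i}"] i(1)
    by (simp add: restr_restr)
  then have Qi: "q (restr v {i}) <\<^sub>\<nu> ?C"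
    using nu_le_less_trans[OF nu_le_trans[OF _ nu_le_add_left] dominant] by blast
  have Qk: "q (restr v {k}) <\<^sub>\<nu> ?C" using nu_le_less_trans[OF nu_le_add_right dominant] .
  have "restr v {i, k} = vadd (restr v {k}) (restr v {i})"
    using restr_insert[of i "{k}" v] i(1) assms(2) by auto
  then have "q (restr v {i, k}) = ?C + q (restr v {k}) + q (restr v {i})"
    using q_vadd[OF fk fi] b_commute[OF fk fi] i(2) by (simp add: ac_simps)
  also have "\<dots> = ?C" using nu_less_absorb Qi Qk by simp
  finally show ?thesis using i(1) by blast
qed

lemma q_restr_nonghost_small_supp:
  assumes "finite S" and "q (restr v S) \<notin> ghostR"
  shows "\<exists>J\<subseteq>S. J \<noteq> {} \<and> card J \<le> 2 \<and> q (restr v J) = q (restr v S)"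
  using assms
proof (induction S rule: finite_induct)
  case empty
  then show ?case using st_e_mult_in_ghostR[of "0::'a"] by (simp add: restr_empty q_zero)
next
  case (insert k S)
  let ?A = "q (restr v S)" and ?B = "q (restr v {k})" and ?C = "b (restr v S) (restr v {k})"
  have decomp: "q (restr v (insert k S)) = ?A + ?B + ?C"
    unfolding restr_insert[OF insert.hyps(2)]
    using insert.hyps(1) by (simp add: q_vadd restr_in_freeV_finite)
  from add_nonghost_cases3[of ?A ?B ?C] insert.prems
  consider (old) "q (restr v (insert k S)) = ?A"
    | (new) "q (restr v (insert k S)) = ?B"
    | (cross) "q (restr v (insert k S)) = ?C" "?A + ?B <\<^sub>\<nu> ?C"
    unfolding decomp by blast
  then show ?case
  proof cases
    case old
    then obtain J where "J \<subseteq> S" "J \<noteq> {}" "card J \<le> 2" "q (restr v J) = ?A"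
      using insert.IH insert.prems by auto
    with old show ?thesis by auto
  next
    case new
    then show ?thesis by (intro exI[of _ "{k}"]) auto
  next
    case cross
    with q_restr_cross_dominant[OF insert.hyps] insert.prems
    obtain i where "i \<in> S" "q (restr v {i, k}) = ?C" by auto
    with cross show ?thesis by (intro exI[of _ "{i, k}"]) (auto simp: card_insert_if)
  qed
qed

lemma q_minimal_restr_ne: "q_minimal q v \<Longrightarrow> restr v S \<noteq> v \<Longrightarrow> q (restr v S) \<noteq> q v"
  unfolding q_minimal_def mless_def using mle_restr restr_in_freeV by blast

lemma q_minimal_nu_equiv_ghost:
  assumes y: "y \<in> freeV" and xmin: "q_minimal q x" and yx: "mless y x" and nu: "q y \<cong>\<^sub>\<nu> q x"
  shows "q x = st_e * q y \<and> q y \<notin> ghostR"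
proof -
  obtain z where z: "z \<in> freeV" "vadd y z = x" using yx unfolding mless_def mle_def by blast
  define w where "w = q z + b y z"
  have qx: "q x = q y + w" unfolding w_def using q_vadd[OF y z(1)] z(2) by (simp add: add.assoc)
  have ne: "q x \<noteq> q y"
  proof
    assume "q x = q y"
    then show False using xmin yx y unfolding q_minimal_def by auto
  qed
  have yw: "q y \<cong>\<^sub>\<nu> w"
  proof (rule ccontr)
    assume "\<not> q y \<cong>\<^sub>\<nu> w"
    with supertropical_add_cases[OF this] show False
      using qx ne nu unfolding nu_equiv_def by auto
  qed
  then have "q x = st_e * q y"
    using supertropical_add_nu_equiv[OF yw] qx unfolding nu_equiv_def by simp
  moreover have "q y \<notin> ghostR" using calculation ne ghostR_iff by auto
  ultimately show ?thesis ..
qed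

lemma q_minimal_supp_cases:
  assumes ymin: "q_minimal q y" and nonghost: "q y \<notin> ghostR"
  obtains (single) j where "supp y = {j}" | (pair) i j where "supp y = {i, j}" "i \<noteq> j"
proof -
  have fin: "finite (supp y)" using ymin unfolding q_minimal_def freeV_def by simp
  have y_eq: "restr y (supp y) = y" by (rule restr_eq_self) simp
  obtain J where J: "J \<subseteq> supp y" "J \<noteq> {}" "card J \<le> 2" "q (restr y J) = q y"
    using q_restr_nonghost_small_supp[OF fin, of y] nonghost unfolding y_eq by blast
  have "J = supp y"
  proof (rule ccontr)
    assume "J \<noteq> supp y"
    then obtain k where "k \<in> supp y" "k \<notin> J" using J(1) by blast
    then have "restr y J k \<noteq> y k" unfolding restr_def supp_def by simp
    then have "restr y J \<noteq> y" by auto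
    then show False using q_minimal_restr_ne[OF ymin] J(4) by blast
  qed
  moreover have "card J \<noteq> 0" using J(2) finite_subset[OF J(1) fin] by simp
  ultimately have "card (supp y) = 1 \<or> card (supp y) = 2" using J(3) by auto
  then show ?thesis using that by (auto simp: card_1_singleton_iff card_2_iff)
qed

lemma q_minimal_pair_cross_dominant:
  assumes ymin: "q_minimal q y" and nonghost: "q y \<notin> ghostR"
    and J: "supp y = {i, j}" "i \<noteq> j"
  shows "q y = y i * y j * b (basis_vec i) (basis_vec j)
    \<and> (y i)^2 * q (basis_vec i) <\<^sub>\<nu> y i * y j * b (basis_vec i) (basis_vec j)
    \<and> (y j)^2 * q (basis_vec j) <\<^sub>\<nu> y i * y j * b (basis_vec i) (basis_vec j)"
proof -
  let ?Qi = "(y i)^2 * q (basis_vec i)" and ?Qj = "(y j)^2 * q (basis_vec j)"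
    and ?B = "y i * y j * b (basis_vec i) (basis_vec j)"
  have qy: "q y = ?Qi + ?Qj + ?B"
    using q_restr_pair[OF J(2), of y] restr_eq_self[of y "{i, j}"] J(1) by simp
  have "restr y {i} j \<noteq> y j" "restr y {j} i \<noteq> y i"
    using J unfolding restr_def supp_def by auto
  then have "restr y {i} \<noteq> y" "restr y {j} \<noteq> y" by auto
  then have "?Qi \<noteq> q y" "?Qj \<noteq> q y"
    using q_minimal_restr_ne[OF ymin, of "{i}"] q_minimal_restr_ne[OF ymin, of "{j}"]
    by (simp_all add: q_restr_singleton)
  then have "q y = ?B" and sum: "?Qi + ?Qj <\<^sub>\<nu> ?B"
    using add_nonghost_cases3[of ?Qi ?Qj ?B] nonghost qy by auto
  then show ?thesis
    using nu_le_less_trans[OF nu_le_add_left sum] nu_le_less_trans[OF nu_le_add_right sum] by blast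
qed

text \<open>Both \<open>y\<close> and \<open>x(supp y)\<close> have \<open>q\<close>-values \<open>\<nu>\<close>-equivalent to \<open>q(y)\<close>; comparing the
  dominant monomials of the two values forces \<open>x\<close> and \<open>y\<close> to agree up to \<open>\<nu>\<close> on \<open>supp y\<close>.\<close>

lemma q_minimal_coords_cases:
  assumes R: "setting_R TYPE('a)"
    and ymin: "q_minimal q y" and nonghost: "q y \<notin> ghostR"
    and x: "x \<in> freeV" and yx: "mle y x" and nu: "q y \<cong>\<^sub>\<nu> q x"
    and k: "k \<in> supp y"
  shows "x k = y k \<or> x k = st_e * y k"
proof (rule mle_coord_cases[OF yx])
  have le: "q x \<le>\<^sub>\<nu> q y" using nu_equiv_imp_nu_le[of "q x" "q y"] nu unfolding nu_equiv_def by simp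
  have le_restr: "q (restr x S) \<le>\<^sub>\<nu> q y" for S
    using nu_le_trans[OF q_mono[OF restr_in_freeV[OF x] mle_restr[OF x]] le] .
  have coord: "y l \<le>\<^sub>\<nu> x l" for l using yx by (rule mle_coord_nu_le)
  from ymin nonghost show "y k \<cong>\<^sub>\<nu> x k"
  proof (cases rule: q_minimal_supp_cases)
    case (single j)
    let ?c = "q (basis_vec j)"
    have qy: "q y = y j * y j * ?c"
      using q_restr_singleton[of y j] restr_eq_self[of y "{j}"] single
      by (simp add: power2_eq_square)
    have "x j * x j * ?c \<le>\<^sub>\<nu> y j * y j * ?c"
      using le_restr[of "{j}"] qy by (simp add: q_restr_singleton power2_eq_square)
    moreover have "y j * y j * ?c \<noteq> 0" using nonghost qy st_e_mult_in_ghostR[of "0::'a"] by auto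
    ultimately have "y j \<cong>\<^sub>\<nu> x j" using nu_equiv_factors[OF R coord[of j] coord[of j]] by blast
    then show ?thesis using k single by simp
  next
    case (pair i j)
    let ?c = "b (basis_vec i) (basis_vec j)"
    have qy: "q y = y i * y j * ?c"
      using q_minimal_pair_cross_dominant[OF ymin nonghost pair] by blast
    have "x i * x j * ?c \<le>\<^sub>\<nu> q (restr x {i, j})"
      unfolding q_restr_pair[OF pair(2)] by (rule nu_le_add_right)
    from nu_le_trans[OF this le_restr]
    have "x i * x j * ?c \<le>\<^sub>\<nu> y i * y j * ?c" using qy by simp
    moreover have "y i * y j * ?c \<noteq> 0" using nonghost qy st_e_mult_in_ghostR[of "0::'a"] by auto
    ultimately have "y i \<cong>\<^sub>\<nu> x i \<and> y j \<cong>\<^sub>\<nu> x j"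
      using nu_equiv_factors[OF R coord[of i] coord[of j]] by blast
    then show ?thesis using k pair by auto
  qed
qed

lemma q_minimal_single_ghost:
  assumes xmin: "q_minimal q x" and J: "supp y = {j}"
    and xj: "x j = st_e * y j" and qx: "q x = st_e * q y"
  shows "x = smult st_e y \<and> supp x = {j}"
proof -
  have "q (restr x {j}) = (st_e * y j)^2 * q (basis_vec j)" by (simp add: q_restr_singleton xj)
  also have "\<dots> = st_e * ((y j)^2 * q (basis_vec j))"
    by (simp add: power2_eq_square mult.assoc mult.left_commute[of "y j" st_e] st_e_mult_absorb)
  also have "\<dots> = st_e * q (restr y {j})" by (simp add: q_restr_singleton)
  also have "restr y {j} = y" by (rule restr_eq_self) (simp add: J)
  finally have xx: "restr x {j} = x" using q_minimal_restr_ne[OF xmin, of "{j}"] qx by fastforce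
  have x0: "x k = 0" if "k \<noteq> j" for k
    using fun_cong[OF xx, of k] that by (simp add: restr_def)
  have y0: "y k = 0" if "k \<noteq> j" for k using J that unfolding supp_def by auto
  have "y j \<noteq> 0" using J unfolding supp_def by auto
  then have "x j \<noteq> 0" using xj st_e_mult_eq_0D[of "y j"] by auto
  then have "supp x = {j}" using x0 unfolding supp_def by blast
  moreover have "x = smult st_e y" unfolding smult_def
  proof
    fix k show "x k = st_e * y k" by (cases "k = j") (simp_all add: xj x0 y0)
  qed
  ultimately show ?thesis by blast
qed

lemma q_restr_pair_ghost:
  assumes "i \<noteq> j"
    and dom_i: "(y i)^2 * q (basis_vec i) <\<^sub>\<nu> y i * y j * b (basis_vec i) (basis_vec j)"
    and dom_j: "(y j)^2 * q (basis_vec j) <\<^sub>\<nu> y i * y j * b (basis_vec i) (basis_vec j)"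
    and vi: "v i \<cong>\<^sub>\<nu> y i" and vj: "v j \<cong>\<^sub>\<nu> y j"
    and vij: "v i * v j = st_e * (y i * y j)"
  shows "q (restr v {i, j}) = st_e * (y i * y j * b (basis_vec i) (basis_vec j))"
proof -
  let ?B = "y i * y j * b (basis_vec i) (basis_vec j)"
  have sq: "(v l)^2 * c \<cong>\<^sub>\<nu> (y l)^2 * c" if "v l \<cong>\<^sub>\<nu> y l" for l c
  proof -
    have "v l * (v l * c) \<cong>\<^sub>\<nu> y l * (v l * c)" "v l * (y l * c) \<cong>\<^sub>\<nu> y l * (y l * c)"
      using nu_equiv_mult_right[OF that] by blast+
    then show ?thesis by (simp add: power2_eq_square nu_equiv_def ac_simps)
  qed
  have eB: "st_e * ?B \<cong>\<^sub>\<nu> ?B" by (simp add: nu_equiv_def st_e_mult_absorb)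
  have "q (restr v {i, j}) = st_e * ?B + (v i)^2 * q (basis_vec i) + (v j)^2 * q (basis_vec j)"
    using q_restr_pair[OF assms(1), of v] vij by (simp add: ac_simps)
  also have "\<dots> = st_e * ?B"
    using nu_less_absorb nu_less_cong[OF sq[OF vi] eB] nu_less_cong[OF sq[OF vj] eB] dom_i dom_j
    by simp
  finally show ?thesis .
qed

text \<open>Doubling only the \<open>i\<close>-th coordinate of \<open>y\<close> gives a vector strictly below \<open>e y\<close> with the
  same value \<open>e q(y)\<close>.\<close>

lemma not_q_minimal_ghost_pair:
  assumes ymin: "q_minimal q y" and nonghost: "q y \<notin> ghostR"
    and J: "supp y = {i, j}" "i \<noteq> j"
  shows "\<not> q_minimal q (smult st_e y)"
proof
  assume min: "q_minimal q (smult st_e y)"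
  have y: "y \<in> freeV" using ymin unfolding q_minimal_def by blast
  note dom = q_minimal_pair_cross_dominant[OF ymin nonghost J]
  then have qy: "q y = y i * y j * b (basis_vec i) (basis_vec j)" by blast
  define Y where "Y = y(i := st_e * y i)"
  have Yi: "Y i = st_e * y i" and Yj: "Y j = y j" using J(2) by (simp_all add: Y_def)
  have "supp Y \<subseteq> {i, j}" using J unfolding Y_def supp_def by auto
  then have YY: "restr Y {i, j} = Y" and fY: "Y \<in> freeV"
    using restr_eq_self finite_subset[of "supp Y" "{i, j}"] unfolding freeV_def by auto
  have "Y i \<cong>\<^sub>\<nu> y i" "Y j \<cong>\<^sub>\<nu> y j" "Y i * Y j = st_e * (y i * y j)"
    by (simp_all add: Yi Yj nu_equiv_def st_e_mult_absorb mult.assoc)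
  then have "q Y = st_e * q y"
    using q_restr_pair_ghost[OF J(2), where v = Y] dom YY qy by simp
  also have "\<dots> = q (smult st_e y)"
    using q_smult[OF y] by (simp add: power2_eq_square st_e_mult_idem)
  finally have same: "q Y = q (smult st_e y)" .
  have "mle Y (smult st_e y)"
    using mle_smult_st_e[OF y] by (simp add: Y_def nu_equiv_def st_e_mult_absorb)
  moreover have "Y \<noteq> smult st_e y"
  proof
    assume Yeq: "Y = smult st_e y"
    have yj: "y j = st_e * y j" using fun_cong[OF Yeq, of j] Yj by (simp add: smult_def)
    have "st_e * q y = y i * (st_e * y j) * b (basis_vec i) (basis_vec j)"
      unfolding qy by (simp only: ac_simps)
    also have "\<dots> = q y" unfolding qy by (simp only: yj[symmetric])
    finally show False using nonghost ghostR_iff by blast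
  qed
  ultimately show False using min fY same unfolding q_minimal_def mless_def by blast
qed

lemma q_minimal_pair_ghost:
  assumes xmin: "q_minimal q x" and ymin: "q_minimal q y" and nonghost: "q y \<notin> ghostR"
    and J: "supp y = {i, j}" "i \<noteq> j" and yx: "mle y x" and qx: "q x = st_e * q y"
    and xi: "x i = y i \<or> x i = st_e * y i" and xj: "x j = y j \<or> x j = st_e * y j"
    and ne: "\<not> (x i = y i \<and> x j = y j)"
  shows "supp x = {i, j} \<and> mless x (smult st_e y)"
proof -
  note dom = q_minimal_pair_cross_dominant[OF ymin nonghost J]
  have y: "y \<in> freeV" using ymin unfolding q_minimal_def by blast
  have eqi: "x i \<cong>\<^sub>\<nu> y i" and eqj: "x j \<cong>\<^sub>\<nu> y j"
    using xi xj by (auto simp: nu_equiv_def st_e_mult_absorb)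
  consider "x i = y i" "x j = st_e * y j" | "x i = st_e * y i" "x j = y j"
    | "x i = st_e * y i" "x j = st_e * y j"
    using xi xj ne by blast
  then have "x i * x j = st_e * (y i * y j)"
    by cases (simp_all only: mult.assoc mult.left_commute[of "y i" st_e] st_e_mult_absorb)
  then have "q (restr x {i, j}) = q x"
    using q_restr_pair_ghost[OF J(2) _ _ eqi eqj] dom qx by simp
  then have xx: "restr x {i, j} = x" using q_minimal_restr_ne[OF xmin, of "{i, j}"] by blast
  have "supp x \<subseteq> {i, j}" using supp_restr[of x "{i, j}", unfolded xx] by blast
  then have suppx: "supp x = {i, j}" using mle_supp_subset[OF yx] J(1) by blast
  have "x k \<cong>\<^sub>\<nu> y k" for k
  proof (cases "k \<in> {i, j}")
    case True
    then show ?thesis using eqi eqj by blast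
  next
    case False
    then have "x k = 0" "y k = 0" using suppx J(1) unfolding supp_def by blast+
    then show ?thesis by (simp add: nu_equiv_def)
  qed
  then have "mle x (smult st_e y)" by (rule mle_smult_st_e[OF y])
  moreover have "x \<noteq> smult st_e y"
    using xmin not_q_minimal_ghost_pair[OF ymin nonghost J] by blast
  ultimately show ?thesis using suppx unfolding mless_def by blast
qed

end

end

theorem theorem7p6:
  fixes q :: "('i \<Rightarrow> 'a::comm_semiring_1) \<Rightarrow> 'a"
    and x y :: "'i \<Rightarrow> 'a"
  assumes R: "setting_R TYPE('a)"
    and Q: "quadratic_form q"
    and x: "x \<in> freeV" and y: "y \<in> freeV"
    and xmin: "q_minimal q x" and ymin: "q_minimal q y"
    and yx: "mless y x"
    and nu: "q y \<cong>\<^sub>\<nu> q x"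
  shows "q y \<in> tangT \<and> q x \<in> ghostG \<and>
    ((card (supp y) = 1 \<and> card (supp x) = 1 \<and> x = smult st_e y) \<or>
     (card (supp y) = 2 \<and> card (supp x) = 2 \<and> mless y x \<and> mless x (smult st_e y)) \<or>
     (card (supp y) = 1 \<and> card (supp x) \<ge> 2 \<and> y = restr x (supp y)) \<or>
     (card (supp y) = 2 \<and> card (supp x) \<ge> 3 \<and> y = restr x (supp y)))"
proof -
  have S: "supertropical TYPE('a)" using R unfolding setting_R_def by blast
  obtain b where form: "quadratic_form_with_companion q b"
    using Q by (rule quadratic_form_obtain_companion)
  have yx': "mle y x" and "y \<noteq> x" using yx unfolding mless_def by blast+
  have qx: "q x = st_e * q y" and nonghost: "q y \<notin> ghostR"
    using q_minimal_nu_equiv_ghost[OF S form y xmin yx nu] by simp_all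
  have q_values: "q y \<in> tangT \<and> q x \<in> ghostG" using tangT_ghostG[OF S nonghost] qx by simp
  have coords: "\<And>k. k \<in> supp y \<Longrightarrow> x k = y k \<or> x k = st_e * y k"
    by (rule q_minimal_coords_cases[OF S form R ymin nonghost x yx' nu])
  have agree: "y = restr x (supp y) \<and> card (supp y) < card (supp x)"
    if "\<forall>k\<in>supp y. x k = y k"
    using restr_supp_eq_card_less[OF x \<open>y \<noteq> x\<close> that] .
  from S form ymin nonghost show ?thesis
  proof (cases rule: q_minimal_supp_cases)
    case (single j)
    then have "x j = y j \<or> x j = st_e * y j" using coords by simp
    then show ?thesis
      using agree q_minimal_single_ghost[OF S form xmin single _ qx] q_values single by auto
  next
    case (pair i j)
    then have xi: "x i = y i \<or> x i = st_e * y i" and xj: "x j = y j \<or> x j = st_e * y j"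
      using coords by simp_all
    show ?thesis
    proof (cases "x i = y i \<and> x j = y j")
      case True
      then show ?thesis using agree q_values pair by auto
    next
      case False
      then show ?thesis
        using q_minimal_pair_ghost[OF S form xmin ymin nonghost pair yx' qx xi xj] q_values pair yx
        by auto
    qed
  qed
qed

end
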